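(* Let $\sigma\in S_t$ and $p\in S_k$, and let $m=\min(t,k)$. If $\mathrm{red}(p_1p_2\cdots p_m)\neq\mathrm{red}(\sigma_1\sigma_2\cdots\sigma_m)$, then the set $\{1\}$ is reversibly deletable for $p$ with respect to $\{(\sigma,[t-1])\}$.
   Context: Notation: $\mathrm{red}(w)$ replaces the $i$-th smallest letter of a word $w$ of distinct integers by $i$. A vincular pattern of length $\ell$ is $(\sigma,X)$ with $\sigma\in S_\ell$, $X\subseteq[\ell-1]$; $\pi\in S_n$ contains it if there are $i_1<\dots<i_\ell$ with $\mathrm{red}(\pi_{i_1}\cdots\pi_{i_\ell})=\sigma$ and $i_{x+1}=i_x+1$ for all $x\in X$; $(\sigma,[t-1])$ for $\sigma\in S_t$ is the consecutive pattern $\sigma$. For $p\in S_k$ and $w\in[n]^k$ with distinct letters and $\mathrm{red}(w)=p$, $S_n^B(p;w)$ is the set of $\pi\in S_n$ avoiding every pattern in $B$ with $\pi_i=w_i$ for $i\le k$. For a set of indices $R$, $d_R(\pi)$ is obtained from $\pi$ by deleting the letters in positions in $R$ and reducing; for a word $w$ with distinct letters, $d_R(w)$ deletes $w_r$ ($r\in R$) and subtracts from each remaining $w_i$ the number of $r\in R$ with $w_r<w_i$. A set $R\subseteq[k]$ is reversibly deletable for $p$ with respect to $B$ if for every $n$ and every such $w$ with $S_n^B(p;w)\neq\emptyset$, the map $d_R$ restricts to a bijection $S_n^B(p;w)\to S_{n-|R|}^B(d_R(p);d_R(w))$. *)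

theory Defs
  imports Main
begin

text \<open>Words and permutations are lists of positive naturals; positions are 1-indexed
  in the paper and 0-indexed in lists (position i of the paper is list index i-1).\<close>

definition is_perm :: "nat \<Rightarrow> nat list \<Rightarrow> bool" where
  "is_perm n \<pi> \<longleftrightarrow> distinct \<pi> \<and> set \<pi> = {1..n}"

definition red :: "nat list \<Rightarrow> nat list" where
  "red w = map (\<lambda>x. card {y \<in> set w. y \<le> x}) w"

text \<open>A vincular pattern is a pair (sigma, X), X a set of 1-indexed adjacency positions.\<close>
type_synonym vpattern = "nat list \<times> nat set"

definition contains :: "nat list \<Rightarrow> vpattern \<Rightarrow> bool" where
  "contains \<pi> P \<longleftrightarrow> (case P of (\<sigma>, X) \<Rightarrow>
     (\<exists>is. length is = length \<sigma> \<and> sorted_wrt (<) is \<and> (\<forall>j\<in>set is. j < length \<pi>) \<and>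
        red (map (\<lambda>j. \<pi> ! j) is) = \<sigma> \<and>
        (\<forall>x\<in>X. is ! x = is ! (x - 1) + 1)))"

definition avoids :: "vpattern set \<Rightarrow> nat list \<Rightarrow> bool" where
  "avoids B \<pi> \<longleftrightarrow> (\<forall>P\<in>B. \<not> contains \<pi> P)"

definition Sprefix :: "nat \<Rightarrow> vpattern set \<Rightarrow> nat list \<Rightarrow> nat list \<Rightarrow> nat list set" where
  "Sprefix n B p w = {\<pi>. is_perm n \<pi> \<and> avoids B \<pi> \<and> (\<forall>i<length w. \<pi> ! i = w ! i)}"

definition keep :: "nat set \<Rightarrow> nat list \<Rightarrow> nat list" where
  "keep R xs = nths xs {i. Suc i \<notin> R}"

definition d_perm :: "nat set \<Rightarrow> nat list \<Rightarrow> nat list" where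
  "d_perm R \<pi> = red (keep R \<pi>)"

definition d_word :: "nat set \<Rightarrow> nat list \<Rightarrow> nat list" where
  "d_word R w = map (\<lambda>x. x - card {r \<in> R. 1 \<le> r \<and> r \<le> length w \<and> w ! (r - 1) < x}) (keep R w)"

definition rev_deletable :: "nat list \<Rightarrow> vpattern set \<Rightarrow> nat set \<Rightarrow> bool" where
  "rev_deletable p B R \<longleftrightarrow> R \<subseteq> {1..length p} \<and>
     (\<forall>n w. length w = length p \<and> distinct w \<and> set w \<subseteq> {1..n} \<and> red w = p \<and>
        Sprefix n B p w \<noteq> {} \<longrightarrow>
        bij_betw (d_perm R) (Sprefix n B p w)
          (Sprefix (n - card R) B (d_perm R p) (d_word R w)))"

end

theory Submission
  imports Defs
begin

(* Avoiding the consecutive pattern (sigma, [t-1]) means having no factor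
   (block of adjacent letters) whose reduction is sigma.  A permutation pi = a # xs with
   first letter a is sent by d_{1} to red xs, which is xs with every letter above a
   shifted down by one; the inverse prepends a and shifts the letters >= a up again.
   Both shifts are order preserving on the relevant letters, so they preserve the
   factors' reductions and hence sigma-avoidance of the tail.  The only factors of pi
   not inside the tail start at its first letter; such a factor of length t would force
   red(p_1..p_m) = red(sigma_1..sigma_m), which the hypothesis excludes. *)

section \<open>Reduction and order-preserving maps\<close>

definition rk :: "nat list \<Rightarrow> nat \<Rightarrow> nat" where
  "rk w x = card {y \<in> set w. y \<le> x}"

lemma red_rk: "red w = map (rk w) w"
  by (simp add: red_def rk_def)

lemma rk_mono:
  assumes "x \<in> set w" "y \<in> set w" "x < y"
  shows "rk w x < rk w y"
proof -
  have "y \<in> {z \<in> set w. z \<le> y}" "y \<notin> {z \<in> set w. z \<le> x}"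
    using assms by auto
  moreover have "{z \<in> set w. z \<le> x} \<subseteq> {z \<in> set w. z \<le> y}"
    using assms by auto
  ultimately have "{z \<in> set w. z \<le> x} \<subset> {z \<in> set w. z \<le> y}"
    by blast
  then show ?thesis
    unfolding rk_def by (intro psubset_card_mono) auto
qed

lemma red_map_mono:
  assumes mono: "\<forall>x\<in>set xs. \<forall>y\<in>set xs. x < y \<longrightarrow> f x < f (y::nat)"
  shows "red (map f xs) = red xs"
proof -
  have inj: "inj_on f (set xs)"
    by (metis mono inj_onI linorder_neq_iff order_less_irrefl)
  have le: "f y \<le> f x \<longleftrightarrow> y \<le> x" if "x \<in> set xs" "y \<in> set xs" for x y
    by (metis mono that leD le_less linorder_le_less_linear)
  have "card {y \<in> f ` set xs. y \<le> f x} = card {y \<in> set xs. y \<le> x}" if x: "x \<in> set xs" for x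
  proof -
    have "{y \<in> f ` set xs. y \<le> f x} = f ` {y \<in> set xs. y \<le> x}"
      using le[OF x] by auto
    moreover have "inj_on f {y \<in> set xs. y \<le> x}"
      using inj by (rule inj_on_subset) auto
    ultimately show ?thesis by (simp add: card_image)
  qed
  then show ?thesis
    unfolding red_def list.set_map map_map o_def by (intro map_cong) simp_all
qed

lemma red_take_red: "red (take m (red w)) = red (take m w)"
  unfolding red_rk[of w] take_map by (rule red_map_mono) (meson in_set_takeD rk_mono)

section \<open>Consecutive occurrences\<close>

definition cocc :: "nat list \<Rightarrow> nat list \<Rightarrow> bool" where
  "cocc \<pi> \<sigma> \<longleftrightarrow> (\<exists>i. i + length \<sigma> \<le> length \<pi> \<and> red (take (length \<sigma>) (drop i \<pi>)) = \<sigma>)"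

lemma cocc_Cons:
  "cocc (a # xs) \<sigma> \<longleftrightarrow>
     (length \<sigma> \<le> Suc (length xs) \<and> red (take (length \<sigma>) (a # xs)) = \<sigma>) \<or> cocc xs \<sigma>"
proof
  assume "cocc (a # xs) \<sigma>"
  then obtain i where i: "i + length \<sigma> \<le> length (a # xs)"
      "red (take (length \<sigma>) (drop i (a # xs))) = \<sigma>"
    unfolding cocc_def by blast
  then show "(length \<sigma> \<le> Suc (length xs) \<and> red (take (length \<sigma>) (a # xs)) = \<sigma>) \<or> cocc xs \<sigma>"
    unfolding cocc_def by (cases i) auto
next
  assume "(length \<sigma> \<le> Suc (length xs) \<and> red (take (length \<sigma>) (a # xs)) = \<sigma>) \<or> cocc xs \<sigma>"
  then show "cocc (a # xs) \<sigma>"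
  proof
    assume "length \<sigma> \<le> Suc (length xs) \<and> red (take (length \<sigma>) (a # xs)) = \<sigma>"
    then show ?thesis unfolding cocc_def by (intro exI[of _ 0]) simp
  next
    assume "cocc xs \<sigma>"
    then obtain i where "i + length \<sigma> \<le> length xs" "red (take (length \<sigma>) (drop i xs)) = \<sigma>"
      unfolding cocc_def by blast
    then show ?thesis unfolding cocc_def by (intro exI[of _ "Suc i"]) simp
  qed
qed

lemma cocc_map:
  assumes "\<forall>x\<in>set xs. \<forall>y\<in>set xs. x < y \<longrightarrow> f x < f (y::nat)"
  shows "cocc (map f xs) \<sigma> \<longleftrightarrow> cocc xs \<sigma>"
proof -
  have "red (take (length \<sigma>) (drop i (map f xs))) = red (take (length \<sigma>) (drop i xs))" for i
    unfolding drop_map take_map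
    by (rule red_map_mono) (meson assms in_set_dropD in_set_takeD)
  then show ?thesis unfolding cocc_def by simp
qed

lemma cocc_red: "cocc (red xs) \<sigma> \<longleftrightarrow> cocc xs \<sigma>"
  unfolding red_rk[of xs] by (rule cocc_map) (meson rk_mono)

lemma adjacent_indices_interval:
  assumes adj: "\<forall>x\<in>{1..t-1}. is ! x = is ! (x-1) + 1" and len: "length is = t"
  shows "is = [is!0..<is!0+t]"
proof (rule nth_equalityI)
  have offset: "is!x = is!0 + x" if "x < t" for x
    using that
  proof (induction x)
    case (Suc x)
    then have "Suc x \<in> {1..t-1}" by auto
    then show ?case using adj Suc by fastforce
  qed simp
  show "length is = length [is!0..<is!0+t]" using len by simp
  fix i assume "i < length is"
  then have "is ! i = is!0 + i" using offset len by blast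
  then show "is ! i = [is!0..<is!0+t] ! i" using \<open>i < length is\<close> len by simp
qed

lemma map_nth_upt: "i + t \<le> length \<pi> \<Longrightarrow> map ((!) \<pi>) [i..<i+t] = take t (drop i \<pi>)"
  by (intro nth_equalityI) auto

lemma contains_consecutive_iff_cocc:
  assumes "\<sigma> \<noteq> []"
  shows "contains \<pi> (\<sigma>, {1..length \<sigma> - 1}) \<longleftrightarrow> cocc \<pi> \<sigma>"
proof
  assume "contains \<pi> (\<sigma>, {1..length \<sigma> - 1})"
  then obtain "is" where h: "length is = length \<sigma>" "\<forall>j\<in>set is. j < length \<pi>"
     "red (map (\<lambda>j. \<pi> ! j) is) = \<sigma>" "\<forall>x\<in>{1..length \<sigma> - 1}. is ! x = is ! (x - 1) + 1"
    unfolding contains_def by auto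
  have interval: "is = [is!0..<is!0+length \<sigma>]"
    using adjacent_indices_interval[OF h(4) h(1)] .
  have "is!0 + length \<sigma> - 1 \<in> set is"
    using assms by (subst interval) (cases \<sigma>, auto)
  then have fits: "is!0 + length \<sigma> \<le> length \<pi>" using h(2) by fastforce
  have "red (take (length \<sigma>) (drop (is!0) \<pi>)) = \<sigma>"
    using h(3) map_nth_upt[OF fits] interval by metis
  then show "cocc \<pi> \<sigma>" unfolding cocc_def using fits by blast
next
  assume "cocc \<pi> \<sigma>"
  then obtain i where i: "i + length \<sigma> \<le> length \<pi>" "red (take (length \<sigma>) (drop i \<pi>)) = \<sigma>"
    unfolding cocc_def by blast
  then show "contains \<pi> (\<sigma>, {1..length \<sigma> - 1})"
    unfolding contains_def using map_nth_upt[OF i(1)]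
    by (auto intro!: exI[of _ "[i..<i+length \<sigma>]"])
qed

section \<open>Permutations and deletion/insertion of the first letter\<close>

lemma perm_length: "is_perm n \<pi> \<Longrightarrow> length \<pi> = n"
  unfolding is_perm_def by (metis card_atLeastAtMost diff_Suc_1 distinct_card)

lemma red_is_perm:
  assumes "distinct xs"
  shows "is_perm (length xs) (red xs)"
proof -
  have inj: "inj_on (rk xs) (set xs)"
    by (metis inj_onI linorder_neq_iff order_less_irrefl rk_mono)
  have dist: "distinct (red xs)"
    unfolding red_rk using assms inj by (simp add: distinct_map)
  have sub: "set (red xs) \<subseteq> {1..length xs}"
  proof
    fix z assume "z \<in> set (red xs)"
    then obtain x where x: "x \<in> set xs" "z = rk xs x" unfolding red_rk by auto
    have "1 \<le> z"
      using x unfolding rk_def by (auto simp: Suc_le_eq card_gt_0_iff)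
    moreover have "z \<le> card (set xs)" unfolding x rk_def by (intro card_mono) auto
    ultimately show "z \<in> {1..length xs}" using assms by (simp add: distinct_card)
  qed
  have "card (set (red xs)) = length xs" using distinct_card[OF dist] by (simp add: red_def)
  then have "set (red xs) = {1..length xs}" using sub by (intro card_subset_eq) auto
  then show ?thesis using dist unfolding is_perm_def by simp
qed

lemma red_perm:
  assumes "is_perm n \<tau>"
  shows "red \<tau> = \<tau>"
proof -
  have "rk \<tau> x = x" if "x \<in> set \<tau>" for x
  proof -
    have "{y \<in> set \<tau>. y \<le> x} = {1..x}" using assms that unfolding is_perm_def by auto
    then show ?thesis unfolding rk_def by simp
  qed
  then show ?thesis unfolding red_rk by (simp add: map_idI)
qed

definition shift_down :: "nat \<Rightarrow> nat \<Rightarrow> nat" where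
  "shift_down a x = (if a < x then x - 1 else x)"

definition shift_up :: "nat \<Rightarrow> nat \<Rightarrow> nat" where
  "shift_up a x = (if a \<le> x then x + 1 else x)"

lemma shift_up_down: "x \<noteq> a \<Longrightarrow> shift_up a (shift_down a x) = x"
  unfolding shift_up_def shift_down_def by auto

lemma shift_down_up: "shift_down a (shift_up a x) = x"
  unfolding shift_up_def shift_down_def by auto

lemma shift_up_mono: "x < y \<Longrightarrow> shift_up a x < shift_up a y"
  unfolding shift_up_def by auto

lemma red_tl_perm:
  assumes "is_perm n (a # xs)"
  shows "red xs = map (shift_down a) xs"
proof -
  have S: "set xs = {1..n} - {a}" "a \<notin> set xs" using assms unfolding is_perm_def by auto
  have "rk xs x = shift_down a x" if x: "x \<in> set xs" for x
  proof -
    have "x \<in> {1..n}" "x \<noteq> a" using S x by blast+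
    then have "{y \<in> set xs. y \<le> x} = {1..x} - {a}"
      unfolding S(1) by auto
    moreover have "1 \<le> a" using assms unfolding is_perm_def by auto
    then have "card ({1..x} - {a}) = shift_down a x"
      using \<open>x \<noteq> a\<close> unfolding shift_down_def by (simp add: card_Diff_singleton_if)
    ultimately show ?thesis unfolding rk_def by simp
  qed
  then show ?thesis unfolding red_rk by simp
qed

lemma perm_insert_first:
  assumes \<tau>: "is_perm (n - 1) \<tau>" and a: "a \<in> {1..n}"
  shows "is_perm n (a # map (shift_up a) \<tau>)"
proof -
  have inj: "inj (shift_up a)" by (metis injI shift_down_up)
  have "shift_up a ` {1..n-1} = {1..n} - {a}"
  proof
    show "shift_up a ` {1..n-1} \<subseteq> {1..n} - {a}" using a unfolding shift_up_def by auto
    show "{1..n} - {a} \<subseteq> shift_up a ` {1..n-1}"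
    proof
      fix y assume y: "y \<in> {1..n} - {a}"
      then have "shift_down a y \<in> {1..n-1}" using a unfolding shift_down_def by auto
      then show "y \<in> shift_up a ` {1..n-1}" using shift_up_down[of y a] y by force
    qed
  qed
  moreover have "a \<notin> shift_up a ` set \<tau>" unfolding shift_up_def by auto
  ultimately show ?thesis
    using \<tau> a inj unfolding is_perm_def by (auto simp: distinct_map intro: inj_on_subset[OF inj])
qed

section \<open>Deleting the first letter of consecutive-pattern avoiders\<close>

definition avoiders :: "nat \<Rightarrow> nat list \<Rightarrow> nat list \<Rightarrow> nat list set" where
  "avoiders n \<sigma> u = {\<pi>. is_perm n \<pi> \<and> \<not> cocc \<pi> \<sigma> \<and> take (length u) \<pi> = u}"

lemma delete_first_avoider:
  assumes "\<pi> \<in> avoiders n \<sigma> (a # v)"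
  shows "\<pi> = a # map (shift_up a) (red (tl \<pi>))"
    and "red (tl \<pi>) \<in> avoiders (n - 1) \<sigma> (map (shift_down a) v)"
proof -
  have perm: "is_perm n \<pi>" and av: "\<not> cocc \<pi> \<sigma>" and pre: "take (Suc (length v)) \<pi> = a # v"
    using assms unfolding avoiders_def by auto
  obtain xs where \<pi>: "\<pi> = a # xs" using pre by (cases \<pi>) auto
  have red_xs: "red xs = map (shift_down a) xs" using red_tl_perm perm \<pi> by simp
  have "a \<notin> set xs" using perm \<pi> unfolding is_perm_def by simp
  then have "map (shift_up a) (map (shift_down a) xs) = xs"
    by (induction xs) (auto simp: shift_up_down)
  then show "\<pi> = a # map (shift_up a) (red (tl \<pi>))" using \<pi> red_xs by simp
  have "distinct xs" "length xs = n - 1"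
    using perm perm_length[OF perm] \<pi> unfolding is_perm_def by auto
  then have "is_perm (n - 1) (red xs)" using red_is_perm by metis
  moreover have "\<not> cocc (red xs) \<sigma>" using av \<pi> cocc_Cons cocc_red by blast
  moreover have "take (length v) (red xs) = map (shift_down a) v"
    using pre \<pi> red_xs by (simp add: take_map)
  ultimately show "red (tl \<pi>) \<in> avoiders (n - 1) \<sigma> (map (shift_down a) v)"
    unfolding avoiders_def using \<pi> by simp
qed

lemma insert_first_avoider:
  assumes \<tau>: "\<tau> \<in> avoiders (n - 1) \<sigma> (map (shift_down a) v)"
    and a: "a \<in> {1..n}" and a_v: "a \<notin> set v"
    and no_start: "\<And>\<pi>. take (Suc (length v)) \<pi> = a # v \<Longrightarrow> red (take (length \<sigma>) \<pi>) \<noteq> \<sigma>"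
  shows "a # map (shift_up a) \<tau> \<in> avoiders n \<sigma> (a # v)"
    and "red (tl (a # map (shift_up a) \<tau>)) = \<tau>"
proof -
  have perm: "is_perm (n - 1) \<tau>" and av: "\<not> cocc \<tau> \<sigma>"
    and pre: "take (length v) \<tau> = map (shift_down a) v"
    using \<tau> unfolding avoiders_def by auto
  have mono: "\<forall>x\<in>set \<tau>. \<forall>y\<in>set \<tau>. x < y \<longrightarrow> shift_up a x < shift_up a y"
    by (simp add: shift_up_mono)
  have "map (shift_up a) (map (shift_down a) v) = v"
    using a_v by (induction v) (auto simp: shift_up_down)
  then have new_pre: "take (Suc (length v)) (a # map (shift_up a) \<tau>) = a # v"
    using pre by (simp add: take_map)
  have "\<not> cocc (a # map (shift_up a) \<tau>) \<sigma>"
    using no_start[OF new_pre] cocc_Cons cocc_map[OF mono] av by blast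
  then show "a # map (shift_up a) \<tau> \<in> avoiders n \<sigma> (a # v)"
    using perm_insert_first[OF perm a] new_pre unfolding avoiders_def by simp
  show "red (tl (a # map (shift_up a) \<tau>)) = \<tau>"
    using red_map_mono[OF mono] red_perm[OF perm] by simp
qed

lemma delete_first_bij:
  assumes a: "a \<in> {1..n}" and a_v: "a \<notin> set v"
    and no_start: "\<And>\<pi>. take (Suc (length v)) \<pi> = a # v \<Longrightarrow> red (take (length \<sigma>) \<pi>) \<noteq> \<sigma>"
  shows "bij_betw (\<lambda>\<pi>. red (tl \<pi>)) (avoiders n \<sigma> (a # v))
           (avoiders (n - 1) \<sigma> (map (shift_down a) v))"
proof (rule bij_betw_byWitness[where f' = "\<lambda>\<tau>. a # map (shift_up a) \<tau>"])
  show "\<forall>\<pi>\<in>avoiders n \<sigma> (a # v). a # map (shift_up a) (red (tl \<pi>)) = \<pi>"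
    using delete_first_avoider(1) by (intro ballI) (rule sym)
  show "\<forall>\<tau>\<in>avoiders (n - 1) \<sigma> (map (shift_down a) v). red (tl (a # map (shift_up a) \<tau>)) = \<tau>"
    using insert_first_avoider(2)[OF _ a a_v no_start] by (intro ballI)
  show "(\<lambda>\<pi>. red (tl \<pi>)) ` avoiders n \<sigma> (a # v) \<subseteq> avoiders (n - 1) \<sigma> (map (shift_down a) v)"
    using delete_first_avoider(2) by (intro image_subsetI)
  show "(\<lambda>\<tau>. a # map (shift_up a) \<tau>) ` avoiders (n - 1) \<sigma> (map (shift_down a) v)
          \<subseteq> avoiders n \<sigma> (a # v)"
    using insert_first_avoider(1)[OF _ a a_v no_start] by (intro image_subsetI)
qed

lemma no_initial_occurrence:
  assumes "red w = p" "take (length p) \<pi> = w"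
    and "red (take (min (length \<sigma>) (length p)) p) \<noteq> red (take (min (length \<sigma>) (length p)) \<sigma>)"
  shows "red (take (length \<sigma>) \<pi>) \<noteq> \<sigma>"
proof
  assume occ: "red (take (length \<sigma>) \<pi>) = \<sigma>"
  define m where "m = min (length \<sigma>) (length p)"
  have "red (take m p) = red (take m w)"
    unfolding assms(1)[symmetric] by (rule red_take_red)
  also have "take m w = take m \<pi>"
    using assms(2) by (auto simp: m_def)
  also have "take m \<pi> = take m (take (length \<sigma>) \<pi>)"
    by (simp add: m_def)
  also have "red \<dots> = red (take m \<sigma>)"
    using red_take_red[of m "take (length \<sigma>) \<pi>"] occ by simp
  finally show False using assms(3) m_def by simp
qed

lemma prefix_iff_take:
  "length w \<le> length \<pi> \<Longrightarrow> (\<forall>i<length w. \<pi> ! i = w ! i) \<longleftrightarrow> take (length w) \<pi> = w"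
proof
  assume "length w \<le> length \<pi>" "\<forall>i<length w. \<pi> ! i = w ! i"
  then show "take (length w) \<pi> = w" by (intro nth_equalityI) auto
qed (metis nth_take)

lemma Sprefix_consecutive:
  assumes "\<sigma> \<noteq> []" "length u \<le> n"
  shows "Sprefix n {(\<sigma>, {1..length \<sigma> - 1})} q u = avoiders n \<sigma> u"
proof -
  have "avoids {(\<sigma>, {1..length \<sigma> - 1})} \<pi> \<longleftrightarrow> \<not> cocc \<pi> \<sigma>" for \<pi>
    unfolding avoids_def using contains_consecutive_iff_cocc[OF assms(1)] by simp
  moreover have "(\<forall>i<length u. \<pi> ! i = u ! i) \<longleftrightarrow> take (length u) \<pi> = u"
    if "is_perm n \<pi>" for \<pi>
    using prefix_iff_take[of u \<pi>] perm_length[OF that] assms(2) by simp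
  ultimately show ?thesis
    unfolding Sprefix_def avoiders_def by blast
qed

lemma d_perm_first: "d_perm {1} \<pi> = red (tl \<pi>)"
proof -
  have "keep {1} (a # ys) = ys" for a ys
    unfolding keep_def nths_Cons by (simp add: nths_all)
  then show ?thesis unfolding d_perm_def by (cases \<pi>) (simp_all add: keep_def)
qed

lemma d_word_first: "d_word {1} (a # v) = map (shift_down a) v"
proof -
  have "card {r \<in> {1::nat}. 1 \<le> r \<and> r \<le> length (a # v) \<and> (a # v) ! (r - 1) < x}
        = (if a < x then 1 else 0)" for x
    by (simp add: Collect_conv_if)
  moreover have "keep {1} (a # v) = v"
    unfolding keep_def nths_Cons by (simp add: nths_all)
  ultimately show ?thesis unfolding d_word_def shift_down_def by simp
qed

theorem mainTheorem2:
  fixes \<sigma> p :: "nat list" and t k :: nat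
  assumes "is_perm t \<sigma>" and "is_perm k p"
    and "red (take (min t k) p) \<noteq> red (take (min t k) \<sigma>)"
  shows "rev_deletable p {(\<sigma>, {1..t - 1})} {1}"
  unfolding rev_deletable_def
proof (intro conjI allI impI)
  have t: "length \<sigma> = t" and k: "length p = k" using assms(1,2) perm_length by auto
  have "min t k \<noteq> 0"
    using assms(3) by (metis take_eq_Nil)
  then have "\<sigma> \<noteq> []" "p \<noteq> []" using t k by auto
  then show "{1} \<subseteq> {1..length p}" by (cases p) auto
  fix n w
  assume "length w = length p \<and> distinct w \<and> set w \<subseteq> {1..n} \<and> red w = p \<and>
          Sprefix n {(\<sigma>, {1..t - 1})} p w \<noteq> {}"
  then have w: "length w = length p" "distinct w" "set w \<subseteq> {1..n}" "red w = p" by auto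
  then obtain a v where av: "w = a # v" using \<open>p \<noteq> []\<close> by (cases w) auto
  have "length w \<le> n" using w card_mono[OF _ w(3)] distinct_card[OF w(2)] by simp
  have no_start: "red (take (length \<sigma>) \<pi>) \<noteq> \<sigma>" if "take (Suc (length v)) \<pi> = a # v" for \<pi>
  proof -
    have "take (length p) \<pi> = w" using that w(1) av by simp
    from no_initial_occurrence[OF w(4) this, where \<sigma> = \<sigma>] show ?thesis
      using assms(3) unfolding t k by blast
  qed
  have a: "a \<in> {1..n}" "a \<notin> set v" using w(2,3) av by auto
  have source: "Sprefix n {(\<sigma>, {1..t - 1})} p w = avoiders n \<sigma> (a # v)"
    using Sprefix_consecutive[OF \<open>\<sigma> \<noteq> []\<close> \<open>length w \<le> n\<close>] t av by simp
  have target: "Sprefix (n - card {1}) {(\<sigma>, {1..t - 1})} (d_perm {1} p) (d_word {1} w)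
      = avoiders (n - 1) \<sigma> (map (shift_down a) v)"
    using Sprefix_consecutive[OF \<open>\<sigma> \<noteq> []\<close>, of "map (shift_down a) v" "n - 1"]
      \<open>length w \<le> n\<close> t av unfolding av d_word_first by simp
  have "d_perm {1} = (\<lambda>\<pi>. red (tl \<pi>))" by (rule ext) (rule d_perm_first)
  with delete_first_bij[OF a no_start]
  show "bij_betw (d_perm {1}) (Sprefix n {(\<sigma>, {1..t - 1})} p w)
      (Sprefix (n - card {1}) {(\<sigma>, {1..t - 1})} (d_perm {1} p) (d_word {1} w))"
    unfolding source target by simp
qed

end
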